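(* Let $f\in\mathrm{Lip}_{[2]}(\mathbb{R})$ with $\|f\|_{\mathrm{Lip}_{[2]}(\mathbb{R})}\le 1$. Then for every $t\ge0$, $\mathbf{P}^0_t f\in\mathrm{Lip}_{[2]}(\mathbb{R})$: $\mathbf{P}^0_t f$ is $1$-Lipschitz and its derivative is $2$-Lipschitz. Furthermore $\mathscr{L}_0\mathbf{P}^0_t f$ is well defined and, for $t>0$, \[ \|\mathscr{L}_0\mathbf{P}^0_t f\|_\infty\le \frac{2}{1-e^{-t}}\,\|f'\|_\infty . \]
   Context: $Z$ denotes a standard Gumbel random variable (density $e^{-(x+e^{-x})}$ on $\mathbb{R}$). For $t\ge0$, $\mathbf{P}^0_t f(x)=\mathbb{E}\big[f\big(\max(x-t,\ Z+\log(1-e^{-t}))\big)\big]$ (convention $\log 0=-\infty$). $\mathscr{L}_0 f(x)=-f'(x)+e^{-x}\mathbb{E}[f'(x+Y)]$ with $Y\sim\mathcal{E}(1)$, which is the generator of $(\mathbf{P}^0_t)_{t\ge0}$. $\mathrm{Lip}_{[2]}(\mathbb{R})$ is the set of Lipschitz $f:\mathbb{R}\to\mathbb{R}$ whose derivative has a Lipschitz representative, with semi-norm $\|f\|_{\mathrm{Lip}_{[2]}(\mathbb{R})}=\max(\|f\|_{\mathrm{Lip}},\|f'\|_{\mathrm{Lip}})$, $\|g\|_{\mathrm{Lip}}$ being the best Lipschitz constant. *)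

theory Defs
  imports "HOL-Analysis.Analysis"
begin

definition gumbel_density :: "real \<Rightarrow> real" where
  "gumbel_density x = exp (- (x + exp (- x)))"

text \<open>The semigroup P^0_t; for t = 0 the convention log 0 = -infinity gives P^0_0 f = f.\<close>
definition P0 :: "real \<Rightarrow> (real \<Rightarrow> real) \<Rightarrow> real \<Rightarrow> real" where
  "P0 t f x = (if t = 0 then f x
     else (\<integral>z. gumbel_density z * f (max (x - t) (z + ln (1 - exp (- t)))) \<partial>lborel))"

definition L0 :: "(real \<Rightarrow> real) \<Rightarrow> real \<Rightarrow> real" where
  "L0 g x = - deriv g x + exp (- x) * (LINT y:{0..}|lborel. exp (- y) * deriv g (x + y))"

definition lip2 :: "(real \<Rightarrow> real) \<Rightarrow> bool" where
  "lip2 f \<longleftrightarrow> (\<exists>C. C-lipschitz_on UNIV f) \<and>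
     (\<exists>g C. (\<forall>x. (f has_real_derivative g x) (at x)) \<and> C-lipschitz_on UNIV g)"

end

theory Submission
  imports Defs "HOL-Real_Asymp.Real_Asymp"
begin

text \<open>
  Let G(z) = exp (-e^{-z}) be the Gumbel distribution function, rho = G' its density and
  c = log (1 - e^{-t}). Splitting the expectation at Z = x - t - c gives
    P^0_t f x = f (x - t) G (x - t - c) + integral over z > x - t - c of rho z f (z + c).
  On differentiating in x the two boundary terms cancel, and G (x - t - c) = exp (-(e^t - 1) e^{-x}), so
    (P^0_t f)' x = f' (x - t) exp (-(e^t - 1) e^{-x}),
  a product of two 1-Lipschitz functions bounded by 1, hence 2-Lipschitz.
  In L_0 P^0_t f x the integral term is then at most
  ||f'|| e^{-x} (integral over y > 0 of e^{-y} exp (-(e^t - 1) e^{-x-y})) <= ||f'|| / (e^t - 1),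
  which gives |L_0 P^0_t f| <= ||f'|| / (1 - e^{-t}), even without the factor 2.
\<close>

lemma lipschitz_on_UNIV_if_deriv_bounded:
  fixes g g' :: "real \<Rightarrow> real"
  assumes "\<And>x. (g has_real_derivative g' x) (at x)" and "\<And>x. \<bar>g' x\<bar> \<le> C"
  shows "C-lipschitz_on UNIV g"
proof (rule lipschitz_onI)
  show "dist (g x) (g y) \<le> C * dist x y" for x y
    using field_differentiable_bound[OF convex_UNIV, of g g' C] assms
    by (simp add: dist_norm)
  show "0 \<le> C" using assms(2)[of 0] by linarith
qed

lemma abs_deriv_le_if_lipschitz_on_UNIV:
  fixes g :: "real \<Rightarrow> real"
  assumes L: "C-lipschitz_on UNIV g" and d: "(g has_real_derivative D) (at x)"
  shows "\<bar>D\<bar> \<le> C"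
proof -
  have "((\<lambda>h. \<bar>(g (x + h) - g x) / h\<bar>) \<longlongrightarrow> \<bar>D\<bar>) (at 0)"
    using d by (intro tendsto_rabs) (simp add: DERIV_def)
  moreover have "\<bar>(g (x + h) - g x) / h\<bar> \<le> C" for h
    using lipschitz_onD[OF L, of "x + h" x] lipschitz_on_nonneg[OF L]
    by (cases "h = 0") (auto simp: dist_real_def abs_divide divide_le_eq)
  ultimately show ?thesis
    by (intro tendsto_upperbound[OF _ _ trivial_limit_at]) auto
qed

lemma lipschitz_on_mult_bounded:
  fixes f g :: "'a::metric_space \<Rightarrow> real"
  assumes "C-lipschitz_on S f" "D-lipschitz_on S g"
    and "\<And>x. x \<in> S \<Longrightarrow> \<bar>f x\<bar> \<le> A" "\<And>x. x \<in> S \<Longrightarrow> \<bar>g x\<bar> \<le> B"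
    and "0 \<le> A" "0 \<le> B"
  shows "(C * B + A * D)-lipschitz_on S (\<lambda>x. f x * g x)"
proof (rule lipschitz_onI)
  fix x y assume xy: "x \<in> S" "y \<in> S"
  have "f x * g x - f y * g y = (f x - f y) * g x + f y * (g x - g y)"
    by (simp add: algebra_simps)
  then have "\<bar>f x * g x - f y * g y\<bar> \<le> \<bar>f x - f y\<bar> * \<bar>g x\<bar> + \<bar>f y\<bar> * \<bar>g x - g y\<bar>"
    by (metis abs_mult abs_triangle_ineq)
  also have "\<dots> \<le> (C * dist x y) * B + A * (D * dist x y)"
    using xy assms lipschitz_onD[OF assms(1) xy] lipschitz_onD[OF assms(2) xy]
    by (intro add_mono mult_mono) (auto simp: dist_real_def)
  finally show "dist (f x * g x) (f y * g y) \<le> (C * B + A * D) * dist x y"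
    by (simp add: dist_real_def algebra_simps)
next
  show "0 \<le> C * B + A * D"
    using assms(5,6) lipschitz_on_nonneg[OF assms(1)] lipschitz_on_nonneg[OF assms(2)] by simp
qed

lemma lipschitz_on_shift:
  fixes f :: "real \<Rightarrow> real"
  assumes "C-lipschitz_on UNIV f"
  shows "C-lipschitz_on UNIV (\<lambda>x. f (x + c))"
proof (rule lipschitz_onI)
  show "dist (f (x + c)) (f (y + c)) \<le> C * dist x y" for x y
    using lipschitz_onD[OF assms, of "x + c" "y + c"] by (simp add: dist_real_def)
qed (rule lipschitz_on_nonneg[OF assms])

lemma exp_neg_exp_neg_le_1:
  fixes A :: real
  assumes "0 \<le> A"
  shows "exp (- A * exp (- x)) \<le> 1"
  using assms by simp

lemma lipschitz_on_exp_neg_exp_neg: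
  fixes A :: real
  assumes "0 \<le> A"
  shows "1-lipschitz_on UNIV (\<lambda>x. exp (- A * exp (- x)))"
proof (rule lipschitz_on_UNIV_if_deriv_bounded)
  fix x :: real
  show "((\<lambda>x. exp (- A * exp (- x))) has_real_derivative
      exp (- A * exp (- x)) * (A * exp (- x))) (at x)"
    by (auto intro!: derivative_eq_intros)
  have "A * exp (- x) \<le> exp (A * exp (- x))"
    using exp_ge_add_one_self[of "A * exp (- x)"] by linarith
  then show "\<bar>exp (- A * exp (- x)) * (A * exp (- x))\<bar> \<le> 1"
    using assms by (simp add: exp_minus field_simps)
qed

lemma set_borel_measurable_continuous_on_UNIV:
  fixes g :: "real \<Rightarrow> real"
  assumes "continuous_on UNIV g" "A \<in> sets borel"
  shows "set_borel_measurable lborel A g"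
  unfolding set_borel_measurable_def measurable_lborel1
  using borel_measurable_continuous_on_indicator[OF assms(2) continuous_on_subset[OF assms(1)]]
  by simp

definition gumbel_cdf :: "real \<Rightarrow> real" where
  "gumbel_cdf z = exp (- exp (- z))"

lemma gumbel_cdf_has_real_derivative:
  "(gumbel_cdf has_real_derivative gumbel_density z) (at z)"
  unfolding gumbel_cdf_def gumbel_density_def
  by (auto intro!: derivative_eq_intros simp: exp_add[symmetric] exp_minus[symmetric] algebra_simps)

lemma gumbel_density_nonneg: "0 \<le> gumbel_density z"
  by (simp add: gumbel_density_def)

lemma gumbel_density_le_exp_neg: "gumbel_density z \<le> exp (- z)"
  by (simp add: gumbel_density_def)

lemma continuous_on_gumbel_density: "continuous_on UNIV gumbel_density"
  unfolding gumbel_density_def by (intro continuous_intros)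

lemma gumbel_density_lower_integral:
  shows "set_integrable lborel (einterval (-\<infinity>) (ereal a)) gumbel_density"
    and "(LBINT z=-\<infinity>..ereal a. gumbel_density z) = gumbel_cdf a"
proof -
  have "(gumbel_cdf \<longlongrightarrow> 0) at_bot"
    unfolding gumbel_cdf_def by real_asymp
  moreover have "(gumbel_cdf \<longlongrightarrow> gumbel_cdf a) (at_left a)"
    using DERIV_isCont[OF gumbel_cdf_has_real_derivative]
    by (simp add: isCont_def filterlim_at_split)
  moreover have "isCont gumbel_density x" for x
    using continuous_on_gumbel_density by (simp add: continuous_on_eq_continuous_at)
  ultimately show "set_integrable lborel (einterval (-\<infinity>) (ereal a)) gumbel_density"
    and "(LBINT z=-\<infinity>..ereal a. gumbel_density z) = gumbel_cdf a"
    using interval_integral_FTC_nonneg[of "-\<infinity>" "ereal a" gumbel_cdf gumbel_density 0 "gumbel_cdf a"]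
      gumbel_cdf_has_real_derivative gumbel_density_nonneg
    by (auto simp: ereal_tendsto_simps1)
qed

lemma gumbel_upper_integrable:
  fixes k :: "real \<Rightarrow> real"
  assumes k: "C-lipschitz_on UNIV k"
  shows "set_integrable lborel (einterval (ereal a) \<infinity>) (\<lambda>z. gumbel_density z * k z)"
proof -
  define K where "K = \<bar>k 0\<bar> + 2 * C * \<bar>a\<bar>"
  define F where "F z = - exp (- z) * (K + C * z + C)" for z
  have C: "0 \<le> C" by (rule lipschitz_on_nonneg[OF k])
  have k_le: "\<bar>k x\<bar> \<le> K + C * x" if "a < x" for x
  proof -
    have "\<bar>k x - k 0\<bar> \<le> C * \<bar>x\<bar>" using lipschitz_onD[OF k, of x 0] by (simp add: dist_real_def)
    moreover have "C * \<bar>x\<bar> \<le> C * (x + 2 * \<bar>a\<bar>)" using that C by (intro mult_left_mono) auto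
    ultimately show ?thesis by (simp add: K_def algebra_simps)
  qed
  have "set_integrable lborel (einterval (ereal a) \<infinity>) (\<lambda>x. exp (- x) * (K + C * x))"
  proof (rule interval_integral_FTC_nonneg(1))
    show "(F has_real_derivative exp (- x) * (K + C * x)) (at x)" for x
      unfolding F_def by (auto intro!: derivative_eq_intros simp: algebra_simps)
    show "isCont (\<lambda>x. exp (- x) * (K + C * x)) x" for x by (intro continuous_intros)
    show "AE x in lborel. ereal a < ereal x \<longrightarrow> ereal x < \<infinity> \<longrightarrow> 0 \<le> exp (- x) * (K + C * x)"
    proof (intro AE_I2 impI)
      fix x assume "ereal a < ereal x"
      then have "0 \<le> K + C * x" using k_le[of x] by simp
      then show "0 \<le> exp (- x) * (K + C * x)" by simp
    qed
    show "((F \<circ> real_of_ereal) \<longlongrightarrow> F a) (at_right (ereal a))"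
      unfolding F_def ereal_tendsto_simps1 by (intro tendsto_intros)
    show "((F \<circ> real_of_ereal) \<longlongrightarrow> 0) (at_left \<infinity>)"
      unfolding F_def ereal_tendsto_simps1 by real_asymp
  qed simp
  then show ?thesis
  proof (rule set_integrable_bound)
    show "set_borel_measurable lborel (einterval (ereal a) \<infinity>) (\<lambda>z. gumbel_density z * k z)"
      using continuous_on_gumbel_density lipschitz_on_continuous_on[OF k]
      by (intro set_borel_measurable_continuous_on_UNIV continuous_intros) auto
    have "\<bar>gumbel_density x * k x\<bar> \<le> \<bar>exp (- x) * (K + C * x)\<bar>" if "a < x" for x
      using k_le[OF that] gumbel_density_nonneg[of x] gumbel_density_le_exp_neg[of x]
      by (simp add: abs_mult mult_mono)
    then show "AE x in lborel. x \<in> einterval (ereal a) \<infinity> \<longrightarrow>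
        norm (gumbel_density x * k x) \<le> norm (exp (- x) * (K + C * x))"
      by (intro AE_I2) simp
  qed
qed

lemma gumbel_upper_integral_has_real_derivative:
  fixes k :: "real \<Rightarrow> real"
  assumes k: "C-lipschitz_on UNIV k"
  shows "((\<lambda>a. LBINT z=ereal a..\<infinity>. gumbel_density z * k z) has_real_derivative
           - (gumbel_density a0 * k a0)) (at a0)"
proof -
  let ?h = "\<lambda>z. gumbel_density z * k z"
  have split: "(LBINT z=ereal a..\<infinity>. ?h z) =
      (LBINT z=ereal (a0 - 1)..\<infinity>. ?h z) - (LBINT z=ereal (a0 - 1)..ereal a. ?h z)" for a
  proof -
    have "interval_lebesgue_integrable lborel (min (ereal (a0 - 1)) (min (ereal a) \<infinity>))
        (max (ereal (a0 - 1)) (max (ereal a) \<infinity>)) ?h"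
      using gumbel_upper_integrable[OF k, of "min (a0 - 1) a"]
      by (cases "a0 - 1 \<le> a") (simp_all add: interval_lebesgue_integrable_def min_def)
    from interval_integral_sum[OF this] show ?thesis by simp
  qed
  have "continuous_on UNIV ?h"
    by (intro continuous_intros continuous_on_gumbel_density lipschitz_on_continuous_on[OF k])
  then have "((\<lambda>u. LBINT y=(a0 - 1)..u. ?h y) has_vector_derivative ?h a0)
      (at a0 within {a0 - 1..a0 + 1})"
    by (intro interval_integral_FTC2) (auto intro: continuous_on_subset)
  then have "((\<lambda>u. LBINT y=(a0 - 1)..u. ?h y) has_real_derivative ?h a0) (at a0)"
    by (simp add: at_within_Icc_at has_real_derivative_iff_has_vector_derivative)
  then have "((\<lambda>a. (LBINT z=ereal (a0 - 1)..\<infinity>. ?h z) - (LBINT z=ereal (a0 - 1)..ereal a. ?h z))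
      has_real_derivative 0 - ?h a0) (at a0)"
    by (intro derivative_intros)
  then show ?thesis unfolding split[symmetric] by simp
qed

lemma gumbel_expectation_max:
  fixes f :: "real \<Rightarrow> real"
  assumes f: "C-lipschitz_on UNIV f"
  shows "(\<integral>z. gumbel_density z * f (max u (z + c)) \<partial>lborel) =
    f u * gumbel_cdf (u - c) + (LBINT z=ereal (u - c)..\<infinity>. gumbel_density z * f (z + c))"
proof -
  define a where "a = u - c"
  let ?lower = "\<lambda>z. indicator (einterval (-\<infinity>) (ereal a)) z *\<^sub>R gumbel_density z"
  let ?upper = "\<lambda>z. indicator (einterval (ereal a) \<infinity>) z *\<^sub>R (gumbel_density z * f (z + c))"
  have lower: "integrable lborel ?lower" "(\<integral>z. ?lower z \<partial>lborel) = gumbel_cdf a"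
    using gumbel_density_lower_integral[of a]
    by (simp_all add: set_integrable_def interval_lebesgue_integral_def set_lebesgue_integral_def)
  have upper: "integrable lborel ?upper"
    using gumbel_upper_integrable[OF lipschitz_on_shift[OF f], of a c]
    by (simp add: set_integrable_def)
  have "gumbel_density z * f (max u (z + c)) = ?lower z * f u + ?upper z" if "z \<notin> {a}" for z
    using that by (cases "z < a") (auto simp: a_def max_def indicator_def)
  then have "(\<integral>z. gumbel_density z * f (max u (z + c)) \<partial>lborel) =
      (\<integral>z. ?lower z * f u + ?upper z \<partial>lborel)"
    by (intro integral_discrete_difference[of "{a}"]) auto
  also have "\<dots> = f u * gumbel_cdf a + (\<integral>z. ?upper z \<partial>lborel)"
    using lower upper by simp
  finally show ?thesis
    by (simp add: a_def interval_lebesgue_integral_def set_lebesgue_integral_def)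
qed

lemma gumbel_expectation_max_has_real_derivative:
  fixes f :: "real \<Rightarrow> real"
  assumes f: "C-lipschitz_on UNIV f" and D: "(f has_real_derivative D) (at u)"
  shows "((\<lambda>u. \<integral>z. gumbel_density z * f (max u (z + c)) \<partial>lborel)
    has_real_derivative D * gumbel_cdf (u - c)) (at u)"
proof -
  have shift: "((\<lambda>u. u - c) has_real_derivative 1) (at u)"
    by (auto intro!: derivative_eq_intros)
  note cdf = DERIV_chain2[OF gumbel_cdf_has_real_derivative shift]
  note upper = DERIV_chain2[OF gumbel_upper_integral_has_real_derivative[OF lipschitz_on_shift[OF f, of c]] shift]
  have "((\<lambda>u. f u * gumbel_cdf (u - c) + (LBINT z=ereal (u - c)..\<infinity>. gumbel_density z * f (z + c)))
      has_real_derivative D * gumbel_cdf (u - c) + f u * gumbel_density (u - c)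
        - gumbel_density (u - c) * f (u - c + c)) (at u)"
    using DERIV_add[OF DERIV_mult[OF D cdf] upper] by simp
  then show ?thesis
    by (simp add: gumbel_expectation_max[OF f])
qed

lemma gumbel_cdf_P0_shift:
  assumes "0 < t"
  shows "gumbel_cdf (x - t - ln (1 - exp (- t))) = exp (- (exp t - 1) * exp (- x))"
proof -
  have "exp (- (x - t - ln (1 - exp (- t)))) = exp (- x) * exp t * (1 - exp (- t))"
    using assms by (simp add: exp_add[symmetric] exp_diff)
  also have "\<dots> = (exp t - 1) * exp (- x)"
    by (simp add: algebra_simps exp_minus)
  finally show ?thesis by (simp add: gumbel_cdf_def algebra_simps)
qed

lemma P0_has_real_derivative:
  fixes f :: "real \<Rightarrow> real"
  assumes t: "0 \<le> t" and f: "C-lipschitz_on UNIV f" and D: "(f has_real_derivative D) (at (x - t))"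
  shows "(P0 t f has_real_derivative D * exp (- (exp t - 1) * exp (- x))) (at x)"
proof (cases "t = 0")
  case True
  then show ?thesis using D by (simp add: P0_def[abs_def])
next
  case False
  define c where "c = ln (1 - exp (- t))"
  have "P0 t f = (\<lambda>x. \<integral>z. gumbel_density z * f (max (x - t) (z + c)) \<partial>lborel)"
    using False by (auto simp: P0_def c_def)
  moreover have shift: "((\<lambda>x. x - t) has_real_derivative 1) (at x)"
    by (auto intro!: derivative_eq_intros)
  ultimately have "(P0 t f has_real_derivative D * gumbel_cdf (x - t - c)) (at x)"
    using DERIV_chain2[OF gumbel_expectation_max_has_real_derivative[OF f D, of c] shift] by simp
  then show ?thesis
    using False t by (simp add: c_def gumbel_cdf_P0_shift)
qed

lemma deriv_P0:
  fixes f f' :: "real \<Rightarrow> real"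
  assumes "0 \<le> t" and "C-lipschitz_on UNIV f" and "\<And>x. (f has_real_derivative f' x) (at x)"
  shows "deriv (P0 t f) = (\<lambda>x. f' (x - t) * exp (- (exp t - 1) * exp (- x)))"
  using P0_has_real_derivative[OF assms(1,2) assms(3)] by (intro ext DERIV_imp_deriv)

lemma lipschitz_on_P0:
  fixes f f' :: "real \<Rightarrow> real"
  assumes t: "0 \<le> t" and f: "C-lipschitz_on UNIV f" and f': "\<And>x. (f has_real_derivative f' x) (at x)"
    and f'_le: "\<And>x. \<bar>f' x\<bar> \<le> B"
  shows "B-lipschitz_on UNIV (P0 t f)"
proof (rule lipschitz_on_UNIV_if_deriv_bounded)
  show "(P0 t f has_real_derivative f' (x - t) * exp (- (exp t - 1) * exp (- x))) (at x)" for x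
    by (rule P0_has_real_derivative[OF t f f'])
  fix x
  have "\<bar>f' (x - t)\<bar> * exp (- (exp t - 1) * exp (- x)) \<le> \<bar>f' (x - t)\<bar>"
    using t by (intro mult_left_le exp_neg_exp_neg_le_1) auto
  then show "\<bar>f' (x - t) * exp (- (exp t - 1) * exp (- x))\<bar> \<le> B"
    using f'_le[of "x - t"] by (simp add: abs_mult)
qed

lemma lipschitz_on_deriv_P0:
  fixes f f' :: "real \<Rightarrow> real"
  assumes t: "0 \<le> t" and f: "C-lipschitz_on UNIV f" and f': "\<And>x. (f has_real_derivative f' x) (at x)"
    and f'_lip: "L-lipschitz_on UNIV f'" and f'_le: "\<And>x. \<bar>f' x\<bar> \<le> B"
  shows "(L + B)-lipschitz_on UNIV (deriv (P0 t f))"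
  using lipschitz_on_mult_bounded[OF lipschitz_on_shift[OF f'_lip, of "- t"]
      lipschitz_on_exp_neg_exp_neg[of "exp t - 1"], of B 1]
    exp_neg_exp_neg_le_1[of "exp t - 1"] t f'_le order_trans[OF abs_ge_zero f'_le]
  by (simp add: deriv_P0[OF t f f'])

lemma set_integrable_exp_neg: "set_integrable lborel {0..} (\<lambda>y. exp (- y) :: real)"
proof -
  have "set_integrable lborel (einterval (ereal 0) \<infinity>) (\<lambda>y. exp (- y) :: real)"
  proof (rule interval_integral_FTC_nonneg(1))
    show "((\<lambda>y. - exp (- y)) has_real_derivative exp (- x)) (at x)" for x :: real
      by (auto intro!: derivative_eq_intros)
    show "(((\<lambda>y. - exp (- y)) \<circ> real_of_ereal) \<longlongrightarrow> - 1) (at_right (ereal 0))"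
      unfolding ereal_tendsto_simps1 by real_asymp
    show "(((\<lambda>y. - exp (- y)) \<circ> real_of_ereal) \<longlongrightarrow> 0) (at_left \<infinity>)"
      unfolding ereal_tendsto_simps1 by real_asymp
  qed auto
  then show ?thesis
    by (subst set_integrable_discrete_difference[where X="{0}" and B="{0<..}"]) auto
qed

lemma set_integrable_exp_neg_mult_bounded:
  fixes h :: "real \<Rightarrow> real"
  assumes "continuous_on UNIV h" and "\<And>y. \<bar>h y\<bar> \<le> B"
  shows "set_integrable lborel {0..} (\<lambda>y. exp (- y) * h (x + y))"
proof (rule set_integrable_bound)
  show "set_integrable lborel {0..} (\<lambda>y. B * exp (- y))"
    using set_integrable_exp_neg by auto
  show "set_borel_measurable lborel {0..} (\<lambda>y. exp (- y) * h (x + y))"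
    by (intro set_borel_measurable_continuous_on_UNIV continuous_intros
        continuous_on_compose2[OF assms(1)]) auto
  have "\<bar>exp (- y) * h (x + y)\<bar> \<le> \<bar>B * exp (- y)\<bar>" for y
    using assms(2)[of "x + y"] by (simp add: abs_mult mult.commute mult_left_mono)
  then show "AE y in lborel. y \<in> {0..} \<longrightarrow> norm (exp (- y) * h (x + y)) \<le> norm (B * exp (- y))"
    by simp
qed

lemma set_integral_exp_neg_mult_exp_exp:
  fixes A x :: real
  assumes A: "0 < A"
  shows "set_integrable lborel {0..} (\<lambda>y. exp (- y) * exp (- A * exp (- (x + y))))"
    and "(LINT y:{0..}|lborel. exp (- y) * exp (- A * exp (- (x + y)))) \<le> exp x / A"
proof -
  let ?j = "\<lambda>y. exp (- y) * exp (- A * exp (- (x + y)))"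
  define F where "F y = exp x / A * exp (- A * exp (- (x + y)))" for y
  have "(F has_real_derivative exp x / A * (exp (- A * exp (- (x + y))) * (A * exp (- (x + y))))) (at y)" for y
    unfolding F_def by (auto intro!: derivative_eq_intros)
  moreover have "exp x / A * (exp (- A * exp (- (x + y))) * (A * exp (- (x + y)))) = ?j y" for y
  proof -
    have "exp x * exp (- (x + y)) = exp (- y)" by (simp add: exp_add[symmetric])
    then show ?thesis using A by (simp add: mult_ac)
  qed
  ultimately have F: "(F has_real_derivative ?j y) (at y)" for y by simp
  have "((\<lambda>y. exp (- A * exp (- (x + y)))) \<longlongrightarrow> 1) at_top"
    using A by real_asymp
  then have "(F \<longlongrightarrow> exp x / A) at_top"
    unfolding F_def using tendsto_mult_left[of _ 1 at_top "exp x / A"] by simp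
  moreover have "(F \<longlongrightarrow> F 0) (at_right 0)"
    unfolding F_def by (intro tendsto_intros)
  ultimately have I: "set_integrable lborel (einterval (ereal 0) \<infinity>) ?j"
    "(LBINT y=ereal 0..\<infinity>. ?j y) = exp x / A - F 0"
    using interval_integral_FTC_nonneg[of "ereal 0" \<infinity> F ?j "F 0" "exp x / A", OF _ F]
    by (auto simp: ereal_tendsto_simps1 intro: continuous_intros)
  show "set_integrable lborel {0..} ?j"
    using I(1) by (subst set_integrable_discrete_difference[where X="{0}" and B="{0<..}"]) auto
  have "(LINT y:{0..}|lborel. ?j y) = (LINT y:{0<..}|lborel. ?j y)"
    by (rule set_integral_discrete_difference[where X="{0}"]) auto
  also have "\<dots> = exp x / A - F 0"
    using I(2) by (simp add: interval_integral_Ioi)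
  also have "\<dots> \<le> exp x / A"
    using A by (simp add: F_def)
  finally show "(LINT y:{0..}|lborel. ?j y) \<le> exp x / A" .
qed

lemma abs_L0_le:
  fixes g g' :: "real \<Rightarrow> real"
  assumes g: "\<And>x. (g has_real_derivative g' x) (at x)" and cont: "continuous_on UNIV g'"
    and A: "0 < A" and g'_le: "\<And>x. \<bar>g' x\<bar> \<le> S * exp (- A * exp (- x))"
  shows "\<bar>L0 g x\<bar> \<le> S * (1 + 1 / A)"
proof -
  have deriv_g: "deriv g = g'"
    using g by (intro ext DERIV_imp_deriv)
  let ?j = "\<lambda>y. exp (- y) * exp (- A * exp (- (x + y)))"
  let ?I = "LINT y:{0..}|lborel. exp (- y) * g' (x + y)"
  have "0 \<le> S * exp (- A * exp (- 0))"
    using order_trans[OF abs_ge_zero g'_le] .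
  then have S: "0 \<le> S" by (simp add: zero_le_mult_iff)
  have g'_le_S: "\<bar>g' y\<bar> \<le> S" for y
    using g'_le[of y] mult_left_le[of "exp (- A * exp (- y))" S] A S by simp
  have int: "set_integrable lborel {0..} (\<lambda>y. exp (- y) * g' (x + y))"
    by (rule set_integrable_exp_neg_mult_bounded[OF cont g'_le_S])
  have "\<bar>?I\<bar> \<le> (LINT y:{0..}|lborel. \<bar>exp (- y) * g' (x + y)\<bar>)"
    using set_integral_norm_bound[OF int] by simp
  also have "\<dots> \<le> (LINT y:{0..}|lborel. S * ?j y)"
  proof (rule set_integral_mono[OF set_integrable_abs[OF int]])
    show "set_integrable lborel {0..} (\<lambda>y. S * ?j y)"
      using set_integral_exp_neg_mult_exp_exp(1)[OF A] by simp
    show "\<bar>exp (- y) * g' (x + y)\<bar> \<le> S * ?j y" for y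
      using g'_le[of "x + y"] by (simp add: abs_mult mult_left_mono mult.left_commute)
  qed
  also have "\<dots> = S * (LINT y:{0..}|lborel. ?j y)" by simp
  also have "\<dots> \<le> S * (exp x / A)"
    by (rule mult_left_mono[OF set_integral_exp_neg_mult_exp_exp(2)[OF A] S])
  finally have I: "\<bar>?I\<bar> \<le> S * (exp x / A)" .
  have "\<bar>L0 g x\<bar> \<le> \<bar>g' x\<bar> + exp (- x) * \<bar>?I\<bar>"
    using abs_triangle_ineq[of "- g' x" "exp (- x) * ?I"] by (simp add: L0_def deriv_g abs_mult)
  also have "\<dots> \<le> S + exp (- x) * (S * (exp x / A))"
    using g'_le_S[of x] I by (intro add_mono mult_left_mono) auto
  also have "\<dots> = S * (1 + 1 / A)"
    by (simp add: exp_minus field_simps)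
  finally show ?thesis .
qed

lemma abs_L0_P0_le:
  fixes f f' :: "real \<Rightarrow> real"
  assumes t: "0 < t" and f: "C-lipschitz_on UNIV f" and f': "\<And>x. (f has_real_derivative f' x) (at x)"
    and "continuous_on UNIV f'" and f'_le: "\<And>x. \<bar>f' x\<bar> \<le> S"
  shows "\<bar>L0 (P0 t f) x\<bar> \<le> S / (1 - exp (- t))"
proof -
  have "\<bar>L0 (P0 t f) x\<bar> \<le> S * (1 + 1 / (exp t - 1))"
  proof (rule abs_L0_le)
    show "(P0 t f has_real_derivative f' (x - t) * exp (- (exp t - 1) * exp (- x))) (at x)" for x
      using t by (intro P0_has_real_derivative[OF _ f f']) simp
    show "continuous_on UNIV (\<lambda>x. f' (x - t) * exp (- (exp t - 1) * exp (- x)))"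
      by (intro continuous_intros continuous_on_compose2[OF assms(4)]) auto
    show "\<bar>f' (x - t) * exp (- (exp t - 1) * exp (- x))\<bar> \<le> S * exp (- (exp t - 1) * exp (- x))" for x
      using f'_le[of "x - t"] by (simp add: abs_mult)
  qed (use t in simp)
  also have "1 + 1 / (exp t - 1) = 1 / (1 - exp (- t))"
    using t by (simp add: exp_minus field_simps)
  finally show ?thesis by simp
qed

theorem corollary2p5:
  fixes f :: "real \<Rightarrow> real"
  assumes "lip2 f"
    and "1-lipschitz_on UNIV f"
    and "1-lipschitz_on UNIV (deriv f)"
  shows "\<forall>t\<ge>0. lip2 (P0 t f) \<and> 1-lipschitz_on UNIV (P0 t f)
           \<and> 2-lipschitz_on UNIV (deriv (P0 t f))
           \<and> (\<forall>x. set_integrable lborel {0..} (\<lambda>y. exp (- y) * deriv (P0 t f) (x + y)))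
           \<and> (t > 0 \<longrightarrow> (\<forall>x. \<bar>L0 (P0 t f) x\<bar> \<le> 2 / (1 - exp (- t)) * (SUP y. \<bar>deriv f y\<bar>)))"
proof (intro allI impI)
  fix t :: real assume t: "0 \<le> t"
  obtain f' where f': "\<And>x. (f has_real_derivative f' x) (at x)"
    using \<open>lip2 f\<close> unfolding lip2_def by blast
  have deriv_f: "deriv f = f'"
    using f' by (intro ext DERIV_imp_deriv)
  have f'_lip: "1-lipschitz_on UNIV f'" and f'_le_1: "\<And>x. \<bar>f' x\<bar> \<le> 1"
    using assms(3) abs_deriv_le_if_lipschitz_on_UNIV[OF assms(2) f'] by (simp_all add: deriv_f)
  have P0': "(P0 t f has_real_derivative deriv (P0 t f) x) (at x)" for x
    using P0_has_real_derivative[OF t assms(2) f'] by (simp add: deriv_P0[OF t assms(2) f'])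
  have P0_lip: "1-lipschitz_on UNIV (P0 t f)"
    by (rule lipschitz_on_P0[OF t assms(2) f' f'_le_1])
  have deriv_P0_lip: "2-lipschitz_on UNIV (deriv (P0 t f))"
    using lipschitz_on_deriv_P0[OF t assms(2) f' f'_lip f'_le_1] by simp
  have "set_integrable lborel {0..} (\<lambda>y. exp (- y) * deriv (P0 t f) (x + y))" for x
    using abs_deriv_le_if_lipschitz_on_UNIV[OF P0_lip P0']
    by (intro set_integrable_exp_neg_mult_bounded[OF lipschitz_on_continuous_on[OF deriv_P0_lip]])
  moreover have "\<bar>L0 (P0 t f) x\<bar> \<le> 2 / (1 - exp (- t)) * (SUP y. \<bar>f' y\<bar>)" if "0 < t" for x
  proof -
    have f'_le_SUP: "\<bar>f' y\<bar> \<le> (SUP y. \<bar>f' y\<bar>)" for y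
      using f'_le_1 by (intro cSUP_upper bdd_aboveI) auto
    have "\<bar>L0 (P0 t f) x\<bar> \<le> (SUP y. \<bar>f' y\<bar>) / (1 - exp (- t))"
      by (rule abs_L0_P0_le[OF that assms(2) f' lipschitz_on_continuous_on[OF f'_lip] f'_le_SUP])
    then show ?thesis
      using that order_trans[OF abs_ge_zero f'_le_SUP] by (simp add: field_simps mult_left_le)
  qed
  ultimately show "lip2 (P0 t f) \<and> 1-lipschitz_on UNIV (P0 t f)
           \<and> 2-lipschitz_on UNIV (deriv (P0 t f))
           \<and> (\<forall>x. set_integrable lborel {0..} (\<lambda>y. exp (- y) * deriv (P0 t f) (x + y)))
           \<and> (t > 0 \<longrightarrow> (\<forall>x. \<bar>L0 (P0 t f) x\<bar> \<le> 2 / (1 - exp (- t)) * (SUP y. \<bar>deriv f y\<bar>)))"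
    using P0' P0_lip deriv_P0_lip unfolding lip2_def deriv_f by blast
qed

end
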